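(* Let $\Lambda$ be a row-finite $2$-graph with no sources. Suppose that every vertex of $\Lambda$ has an aperiodic quartet (an $(a,b)$-aperiodic quartet for some positive integers $a,b$). Then $\Lambda$ is strongly aperiodic.
   Context: A $k$-graph is a countable category $\Lambda$ with a functor $d:\Lambda\to\mathbb{N}^k$ satisfying the factorization property: whenever $d(\lambda)=m+n$ there are unique $\mu,\nu$ with $\lambda=\mu\nu$, $d(\mu)=m$, $d(\nu)=n$. $\Lambda^n=d^{-1}(n)$, $\Lambda^0$ the vertices, $r,s$ range and source, $v\Lambda^n w=\{\lambda:r(\lambda)=v,d(\lambda)=n,s(\lambda)=w\}$. Row-finite: each $v\Lambda^n$ finite; no sources: $v\Lambda^{e_i}\ne\emptyset$ for all $v,i$. For $0\le m\le n\le d(\lambda)$, $\lambda(m,n)$ is the unique path with $\lambda=\lambda'\lambda(m,n)\lambda''$, $d(\lambda')=m$, $d(\lambda(m,n))=n-m$. No local periodicity at $v$: for each $m\neq n\in\mathbb{N}^k$ there is $\lambda$ with $r(\lambda)=v$, $d(\lambda)\ge m\vee n$ and $\lambda(m,m+d(\lambda)-(m\vee n))\neq\lambda(n,n+d(\lambda)-(m\vee n))$; aperiodic: no local periodicity at every vertex. Write $v\le w$ iff there is a path with range $v$ and source $w$. $H\subseteq\Lambda^0$ is hereditary if $v\in H$, $v\le w$ imply $w\in H$; saturated if for every $v$: $r^{-1}(v)\ne\emptyset$ and $\{s(\lambda):\lambda\in v\Lambda^{e_i}\}\subseteq H$ for some $i$ imply $v\in H$. For saturated hereditary $H\subsetneq\Lambda^0$,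 $\Gamma(\Lambda\setminus H)$ is the $k$-graph with vertices $\Lambda^0\setminus H$ and morphisms $\{\lambda:s(\lambda)\notin H\}$ (a row-finite $k$-graph with no sources). $\Lambda$ is strongly aperiodic if $\Gamma(\Lambda\setminus H)$ is aperiodic for all saturated hereditary $H\subsetneq\Lambda^0$. An $(a,b)$-aperiodic quartet at $u$ is $(\alpha_1,\alpha_2,\beta_1,\beta_2)$ with $\alpha_1\neq\alpha_2\in u\Lambda^{ae_1}u$, $\beta_1\neq\beta_2\in u\Lambda^{be_2}u$, $\beta_2\alpha_1=\alpha_1\beta_2$, $\beta_2\alpha_2=\alpha_2\beta_2$, $\beta_1\alpha_1=\alpha_2\beta_1$, $\beta_1\alpha_2=\alpha_1\beta_1$. *)

theory Defs
  imports Main "HOL-Library.Product_Plus" "HOL-Library.Product_Order" "HOL-Library.Countable_Set"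
begin

text \<open>A 2-graph, presented as a small category whose morphisms lie in the set mor,
  with range/source maps (valued in identity morphisms), partial composition cmp
  (cmp x y means x followed-by-range convention: x y with src x = rng y) and degree
  functor deg into N^2 = nat \<times> nat (componentwise order, sup = join).\<close>

record 'a kgraph2 =
  mor :: "'a set"
  rng :: "'a \<Rightarrow> 'a"
  src :: "'a \<Rightarrow> 'a"
  cmp :: "'a \<Rightarrow> 'a \<Rightarrow> 'a"
  deg :: "'a \<Rightarrow> nat \<times> nat"

definition is_2graph :: "('a, 'b) kgraph2_scheme \<Rightarrow> bool" where
  "is_2graph G \<longleftrightarrow>
     countable (mor G) \<and>
     (\<forall>x\<in>mor G. rng G x \<in> mor G \<and> src G x \<in> mor G) \<and>
     (\<forall>x\<in>mor G. rng G (rng G x) = rng G x \<and> src G (rng G x) = rng G x \<and>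
                 rng G (src G x) = src G x \<and> src G (src G x) = src G x) \<and>
     (\<forall>x\<in>mor G. cmp G (rng G x) x = x \<and> cmp G x (src G x) = x) \<and>
     (\<forall>x\<in>mor G. \<forall>y\<in>mor G. src G x = rng G y \<longrightarrow>
         cmp G x y \<in> mor G \<and> rng G (cmp G x y) = rng G x \<and> src G (cmp G x y) = src G y) \<and>
     (\<forall>x\<in>mor G. \<forall>y\<in>mor G. \<forall>z\<in>mor G. src G x = rng G y \<and> src G y = rng G z \<longrightarrow>
         cmp G (cmp G x y) z = cmp G x (cmp G y z)) \<and>
     (\<forall>x\<in>mor G. deg G (rng G x) = 0) \<and>
     (\<forall>x\<in>mor G. \<forall>y\<in>mor G. src G x = rng G y \<longrightarrow> deg G (cmp G x y) = deg G x + deg G y) \<and>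
     (\<forall>l\<in>mor G. \<forall>m n. deg G l = m + n \<longrightarrow>
         (\<exists>!p. fst p \<in> mor G \<and> snd p \<in> mor G \<and> src G (fst p) = rng G (snd p) \<and>
               l = cmp G (fst p) (snd p) \<and> deg G (fst p) = m \<and> deg G (snd p) = n))"

definition verts :: "('a, 'b) kgraph2_scheme \<Rightarrow> 'a set" where
  "verts G = {v \<in> mor G. deg G v = 0}"

definition e1 :: "nat \<times> nat" where "e1 = (1, 0)"
definition e2 :: "nat \<times> nat" where "e2 = (0, 1)"

definition paths_rng_deg :: "('a, 'b) kgraph2_scheme \<Rightarrow> 'a \<Rightarrow> nat \<times> nat \<Rightarrow> 'a set" where
  "paths_rng_deg G v n = {l \<in> mor G. rng G l = v \<and> deg G l = n}"

definition paths_rng_deg_src :: "('a, 'b) kgraph2_scheme \<Rightarrow> 'a \<Rightarrow> nat \<times> nat \<Rightarrow> 'a \<Rightarrow> 'a set" where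
  "paths_rng_deg_src G v n w = {l \<in> mor G. rng G l = v \<and> deg G l = n \<and> src G l = w}"

definition row_finite :: "('a, 'b) kgraph2_scheme \<Rightarrow> bool" where
  "row_finite G \<longleftrightarrow> (\<forall>v\<in>verts G. \<forall>n. finite (paths_rng_deg G v n))"

definition no_sources :: "('a, 'b) kgraph2_scheme \<Rightarrow> bool" where
  "no_sources G \<longleftrightarrow> (\<forall>v\<in>verts G. paths_rng_deg G v e1 \<noteq> {} \<and> paths_rng_deg G v e2 \<noteq> {})"

definition seg :: "('a, 'b) kgraph2_scheme \<Rightarrow> 'a \<Rightarrow> nat \<times> nat \<Rightarrow> nat \<times> nat \<Rightarrow> 'a" where
  "seg G l m n = (THE p. \<exists>x y. x \<in> mor G \<and> p \<in> mor G \<and> y \<in> mor G \<and>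
       src G x = rng G p \<and> src G p = rng G y \<and>
       l = cmp G (cmp G x p) y \<and> deg G x = m \<and> deg G p = n - m)"

definition no_local_periodicity :: "('a, 'b) kgraph2_scheme \<Rightarrow> 'a \<Rightarrow> bool" where
  "no_local_periodicity G v \<longleftrightarrow>
     (\<forall>m n. m \<noteq> n \<longrightarrow>
        (\<exists>l\<in>mor G. rng G l = v \<and> sup m n \<le> deg G l \<and>
            seg G l m (m + (deg G l - sup m n)) \<noteq> seg G l n (n + (deg G l - sup m n))))"

definition aperiodic :: "('a, 'b) kgraph2_scheme \<Rightarrow> bool" where
  "aperiodic G \<longleftrightarrow> (\<forall>v\<in>verts G. no_local_periodicity G v)"

definition path_le :: "('a, 'b) kgraph2_scheme \<Rightarrow> 'a \<Rightarrow> 'a \<Rightarrow> bool" where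
  "path_le G v w \<longleftrightarrow> (\<exists>l\<in>mor G. rng G l = v \<and> src G l = w)"

definition hereditary :: "('a, 'b) kgraph2_scheme \<Rightarrow> 'a set \<Rightarrow> bool" where
  "hereditary G H \<longleftrightarrow> (\<forall>v\<in>H. \<forall>w\<in>verts G. path_le G v w \<longrightarrow> w \<in> H)"

definition saturated :: "('a, 'b) kgraph2_scheme \<Rightarrow> 'a set \<Rightarrow> bool" where
  "saturated G H \<longleftrightarrow>
     (\<forall>v\<in>verts G. {l \<in> mor G. rng G l = v} \<noteq> {} \<and>
        (\<exists>i\<in>{e1, e2}. src G ` paths_rng_deg G v i \<subseteq> H) \<longrightarrow> v \<in> H)"

definition Gamma :: "('a, 'b) kgraph2_scheme \<Rightarrow> 'a set \<Rightarrow> ('a, 'b) kgraph2_scheme" where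
  "Gamma G H = G\<lparr>mor := {l \<in> mor G. src G l \<notin> H}\<rparr>"

definition strongly_aperiodic :: "('a, 'b) kgraph2_scheme \<Rightarrow> bool" where
  "strongly_aperiodic G \<longleftrightarrow>
     (\<forall>H. H \<subseteq> verts G \<and> H \<noteq> verts G \<and> hereditary G H \<and> saturated G H
          \<longrightarrow> aperiodic (Gamma G H))"

definition aperiodic_quartet ::
  "('a, 'b) kgraph2_scheme \<Rightarrow> nat \<Rightarrow> nat \<Rightarrow> 'a \<Rightarrow> 'a \<Rightarrow> 'a \<Rightarrow> 'a \<Rightarrow> 'a \<Rightarrow> bool" where
  "aperiodic_quartet G a b u a1 a2 b1 b2 \<longleftrightarrow>
     a1 \<noteq> a2 \<and> a1 \<in> paths_rng_deg_src G u (a, 0) u \<and> a2 \<in> paths_rng_deg_src G u (a, 0) u \<and>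
     b1 \<noteq> b2 \<and> b1 \<in> paths_rng_deg_src G u (0, b) u \<and> b2 \<in> paths_rng_deg_src G u (0, b) u \<and>
     cmp G b2 a1 = cmp G a1 b2 \<and> cmp G b2 a2 = cmp G a2 b2 \<and>
     cmp G b1 a1 = cmp G a2 b1 \<and> cmp G b1 a2 = cmp G a1 b1"

end

theory Submission
  imports Defs
begin

text \<open>Let \<open>v\<close> be a vertex outside a hereditary set \<open>H\<close>, carrying an aperiodic quartet
  \<open>(a1, a2, b1, b2)\<close> of degrees \<open>(a, 0)\<close> and \<open>(0, b)\<close>. Any word in the \<open>a\<close>'s followed by a word
  in the \<open>b\<close>'s is a loop at \<open>v\<close>, and moving a \<open>b\<close> past an \<open>a\<close> swaps \<open>a1\<close> and \<open>a2\<close> exactly when the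
  \<open>b\<close> is \<open>b1\<close>. Given \<open>m \<noteq> n\<close>, take such a loop \<open>l\<close> with a single \<open>a1\<close> and a single \<open>b1\<close>, placed
  at the coordinates of \<open>(a b) m\<close>. If \<open>l\<close> had \<open>l(m, m + t) = l(n, n + t)\<close> for
  \<open>t = d(l) - (m \<squnion> n)\<close>, then all windows of \<open>l\<close> would be invariant under translation from \<open>m\<close>
  to \<open>n\<close>; translating \<open>a b\<close> times moves the window at \<open>(a b) m\<close>, which reads \<open>a1\<close> or \<open>b1\<close>, to the
  window at \<open>(a b) n\<close>, which reads \<open>a2\<close> or \<open>b2\<close>. As \<open>l\<close> has source \<open>v \<notin> H\<close>, it and all its
  segments live in \<open>Gamma G H\<close>.\<close>

abbreviation scale :: "nat \<Rightarrow> nat \<times> nat \<Rightarrow> nat \<times> nat" where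
  "scale k \<equiv> map_prod ((*) k) ((*) k)"

lemma add_diff_sup_le:
  fixes m n d :: "nat \<times> nat"
  assumes "sup m n \<le> d"
  shows "m + (d - sup m n) \<le> d" "n + (d - sup m n) \<le> d"
  using assms by (auto simp: less_eq_prod_def sup_prod_def sup_nat_def)

locale two_graph =
  fixes G :: "('a, 'b) kgraph2_scheme"
  assumes is_2graph: "is_2graph G"
begin

lemma rng_mor: "x \<in> mor G \<Longrightarrow> rng G x \<in> mor G"
  and src_mor: "x \<in> mor G \<Longrightarrow> src G x \<in> mor G"
  and rng_rng: "x \<in> mor G \<Longrightarrow> rng G (rng G x) = rng G x"
  and src_rng: "x \<in> mor G \<Longrightarrow> src G (rng G x) = rng G x"
  and rng_src: "x \<in> mor G \<Longrightarrow> rng G (src G x) = src G x"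
  and cmp_rng_left: "x \<in> mor G \<Longrightarrow> cmp G (rng G x) x = x"
  and cmp_src_right: "x \<in> mor G \<Longrightarrow> cmp G x (src G x) = x"
  and deg_rng: "x \<in> mor G \<Longrightarrow> deg G (rng G x) = 0"
  using is_2graph by (simp_all add: is_2graph_def)

lemma cmp_mor: "\<lbrakk>x \<in> mor G; y \<in> mor G; src G x = rng G y\<rbrakk> \<Longrightarrow> cmp G x y \<in> mor G"
  and rng_cmp: "\<lbrakk>x \<in> mor G; y \<in> mor G; src G x = rng G y\<rbrakk> \<Longrightarrow> rng G (cmp G x y) = rng G x"
  and src_cmp: "\<lbrakk>x \<in> mor G; y \<in> mor G; src G x = rng G y\<rbrakk> \<Longrightarrow> src G (cmp G x y) = src G y"
  and deg_cmp: "\<lbrakk>x \<in> mor G; y \<in> mor G; src G x = rng G y\<rbrakk> \<Longrightarrow> deg G (cmp G x y) = deg G x + deg G y"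
  using is_2graph by (simp_all add: is_2graph_def)

lemma cmp_assoc:
  "\<lbrakk>x \<in> mor G; y \<in> mor G; z \<in> mor G; src G x = rng G y; src G y = rng G z\<rbrakk>
   \<Longrightarrow> cmp G (cmp G x y) z = cmp G x (cmp G y z)"
  using is_2graph by (simp add: is_2graph_def)

lemmas cmp_simps = cmp_mor rng_cmp src_cmp deg_cmp cmp_assoc

lemma unique_factorization:
  assumes "l \<in> mor G" "deg G l = m + n"
  shows "\<exists>!p. fst p \<in> mor G \<and> snd p \<in> mor G \<and> src G (fst p) = rng G (snd p) \<and>
      l = cmp G (fst p) (snd p) \<and> deg G (fst p) = m \<and> deg G (snd p) = n"
proof -
  have "\<forall>l\<in>mor G. \<forall>m n. deg G l = m + n \<longrightarrow>
     (\<exists>!p. fst p \<in> mor G \<and> snd p \<in> mor G \<and> src G (fst p) = rng G (snd p) \<and>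
        l = cmp G (fst p) (snd p) \<and> deg G (fst p) = m \<and> deg G (snd p) = n)"
    using is_2graph unfolding is_2graph_def by (elim conjE) assumption
  then show ?thesis using assms by blast
qed

lemma factorization_exists:
  assumes "l \<in> mor G" "deg G l = m + n"
  obtains x y where "x \<in> mor G" "y \<in> mor G" "src G x = rng G y" "l = cmp G x y"
    "deg G x = m" "deg G y = n"
  using unique_factorization[OF assms] by auto

lemma factorization_unique:
  assumes "x \<in> mor G" "y \<in> mor G" "src G x = rng G y"
    and "x' \<in> mor G" "y' \<in> mor G" "src G x' = rng G y'"
    and "cmp G x y = cmp G x' y'" "deg G x = deg G x'" "deg G y = deg G y'"
  shows "x = x' \<and> y = y'"
proof -
  let ?l = "cmp G x y"
  have "?l \<in> mor G" "deg G ?l = deg G x + deg G y"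
    using assms by (simp_all add: cmp_simps)
  then have "\<exists>!p. fst p \<in> mor G \<and> snd p \<in> mor G \<and> src G (fst p) = rng G (snd p) \<and>
      ?l = cmp G (fst p) (snd p) \<and> deg G (fst p) = deg G x \<and> deg G (snd p) = deg G y"
    by (rule unique_factorization)
  then have "(x, y) = (x', y')"
    using assms by (elim ex1E) (metis fst_conv snd_conv)
  then show ?thesis by simp
qed

lemma deg_0_rng_src:
  assumes "x \<in> mor G" "deg G x = 0"
  shows "rng G x = x" "src G x = x"
proof -
  have "rng G x = x \<and> x = src G x"
  proof (rule factorization_unique)
    show "cmp G (rng G x) x = cmp G x (src G x)"
      using assms by (simp add: cmp_rng_left cmp_src_right)
    show "deg G (rng G x) = deg G x" "deg G x = deg G (src G x)"
      using assms deg_rng[of "src G x"] by (simp_all add: deg_rng src_mor rng_src)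
  qed (use assms in \<open>simp_all add: rng_mor src_mor src_rng rng_src\<close>)
  then show "rng G x = x" "src G x = x" by simp_all
qed

lemma src_in_verts: "x \<in> mor G \<Longrightarrow> src G x \<in> verts G"
  unfolding verts_def using deg_rng[of "src G x"] by (simp add: src_mor rng_src)

definition seg_factorization :: "'a \<Rightarrow> nat \<times> nat \<Rightarrow> nat \<times> nat \<Rightarrow> 'a \<Rightarrow> 'a \<Rightarrow> 'a \<Rightarrow> bool" where
  "seg_factorization l m n x p y \<longleftrightarrow> x \<in> mor G \<and> p \<in> mor G \<and> y \<in> mor G \<and>
     src G x = rng G p \<and> src G p = rng G y \<and>
     l = cmp G (cmp G x p) y \<and> deg G x = m \<and> deg G p = n - m"

lemma seg_factorization_unique:
  assumes "seg_factorization l m n x p y" "seg_factorization l m n x' p' y'"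
  shows "x = x' \<and> p = p' \<and> y = y'"
proof -
  note F = assms[unfolded seg_factorization_def]
  have xp: "cmp G x p \<in> mor G" "cmp G x' p' \<in> mor G"
    "src G (cmp G x p) = rng G y" "src G (cmp G x' p') = rng G y'"
    using F by (simp_all add: cmp_simps)
  have "deg G (cmp G x p) = deg G (cmp G x' p')"
    using F by (simp add: cmp_simps)
  moreover have "deg G (cmp G x p) + deg G y = deg G (cmp G x' p') + deg G y'"
    using F xp by (metis deg_cmp)
  ultimately have "cmp G x p = cmp G x' p' \<and> y = y'"
    using F xp by (intro factorization_unique) simp_all
  moreover from this have "x = x' \<and> p = p'"
    using F by (intro factorization_unique) simp_all
  ultimately show ?thesis by simp
qed

lemma seg_restrict_eq:
  assumes "S \<subseteq> mor G" "seg_factorization l m n x p y" "x \<in> S" "p \<in> S" "y \<in> S"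
  shows "seg (G\<lparr>mor := S\<rparr>) l m n = p"
proof -
  have "seg (G\<lparr>mor := S\<rparr>) l m n =
      (THE p. \<exists>x y. x \<in> S \<and> p \<in> S \<and> y \<in> S \<and> seg_factorization l m n x p y)"
    unfolding seg_def seg_factorization_def using assms(1) by (intro arg_cong[where f = The] ext) auto
  also have "\<dots> = p"
    using assms(2-5) seg_factorization_unique by (intro the_equality) blast+
  finally show ?thesis .
qed

lemma seg_eq:
  assumes "seg_factorization l m n x p y"
  shows "seg G l m n = p"
proof -
  have "x \<in> mor G" "p \<in> mor G" "y \<in> mor G"
    using assms by (simp_all add: seg_factorization_def)
  then show ?thesis
    using seg_restrict_eq[OF subset_refl assms] by simp
qed

lemma seg_factorization_exists:
  assumes "l \<in> mor G" "m \<le> n" "n \<le> deg G l"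
  obtains x p y where "seg_factorization l m n x p y"
proof -
  have "deg G l = n + (deg G l - n)"
    using assms by (auto simp: prod_eq_iff less_eq_prod_def)
  then obtain q y where q: "q \<in> mor G" "y \<in> mor G" "src G q = rng G y" "l = cmp G q y"
    "deg G q = n"
    by (rule factorization_exists[OF assms(1)])
  then have "deg G q = m + (n - m)"
    using assms(2) by (auto simp: prod_eq_iff less_eq_prod_def)
  then obtain x p where "x \<in> mor G" "p \<in> mor G" "src G x = rng G p" "q = cmp G x p"
    "deg G x = m" "deg G p = n - m"
    by (rule factorization_exists[OF q(1)])
  with q have "seg_factorization l m n x p y"
    unfolding seg_factorization_def by (auto simp: cmp_simps)
  then show ?thesis by (rule that)
qed

lemma seg_of_seg:
  assumes "seg_factorization l m (m + t) x p y" "r + s \<le> t"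
  shows "seg G l (m + r) (m + r + s) = seg G p r (r + s)"
proof -
  note F = assms(1)[unfolded seg_factorization_def]
  have "r \<le> r + s" "r + s \<le> deg G p"
    using F assms(2) by (auto simp: less_eq_prod_def)
  with F obtain x' p' y' where F': "seg_factorization p r (r + s) x' p' y'"
    by (meson seg_factorization_exists)
  then have "seg_factorization l (m + r) (m + r + s) (cmp G x x') p' (cmp G y' y)"
    using F unfolding seg_factorization_def by (auto simp: cmp_simps prod_eq_iff)
  then show ?thesis
    using seg_eq F' by metis
qed

lemma seg_shift:
  assumes "l \<in> mor G" "m + t \<le> deg G l" "n + t \<le> deg G l"
    and "seg G l m (m + t) = seg G l n (n + t)" "r + s \<le> t"
  shows "seg G l (m + r) (m + r + s) = seg G l (n + r) (n + r + s)"
proof -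
  have "m \<le> m + t" "n \<le> n + t"
    by (simp_all add: less_eq_prod_def)
  then obtain x p y x' p' y' where F: "seg_factorization l m (m + t) x p y"
    and F': "seg_factorization l n (n + t) x' p' y'"
    using assms(1-3) by (meson seg_factorization_exists)
  have "p = p'"
    using assms(4) seg_eq[OF F] seg_eq[OF F'] by simp
  then show ?thesis
    using seg_of_seg[OF F assms(5)] seg_of_seg[OF F' assms(5)] by simp
qed

text \<open>Iterating the shift from \<open>m\<close> to \<open>n\<close> along
  \<open>scale K m, scale (K - 1) m + n, \<dots>, scale K n\<close>.\<close>

lemma seg_shift_multiple:
  assumes "l \<in> mor G" "m + t \<le> deg G l" "n + t \<le> deg G l"
    and "seg G l m (m + t) = seg G l n (n + t)" "scale (K - 1) (sup m n) + s \<le> t"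
  shows "seg G l (scale K m) (scale K m + s) = seg G l (scale K n) (scale K n + s)"
proof -
  define X where "X j = scale (K - j) m + scale j n" for j
  have "seg G l (X 0) (X 0 + s) = seg G l (X j) (X j + s)" if "j \<le> K" for j
    using that
  proof (induction j)
    case 0
    then show ?case by simp
  next
    case (Suc j)
    obtain k where K: "K = Suc j + k"
      using Suc.prems le_Suc_ex by blast
    define r where "r = scale k m + scale j n"
    have bound: "k * u + j * w \<le> (j + k) * max u w" for u w :: nat
    proof -
      have "k * u \<le> k * max u w" "j * w \<le> j * max u w" by simp_all
      then show ?thesis
        by (simp add: add_mult_distrib add.commute add_mono)
    qed
    have "r \<le> scale (K - 1) (sup m n)"
      unfolding r_def K by (cases m, cases n) (simp add: less_eq_prod_def sup_prod_def sup_nat_def bound)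
    then have "r + s \<le> t"
      using assms(5) by (auto simp: less_eq_prod_def)
    moreover have "X j = m + r" "X (Suc j) = n + r"
      unfolding X_def r_def K by (simp_all add: prod_eq_iff)
    ultimately show ?case
      using Suc seg_shift[OF assms(1-4)] by simp
  qed
  moreover have "X 0 = scale K m" "X K = scale K n"
    unfolding X_def by (cases m; cases n; simp)+
  ultimately show ?thesis
    by (metis order_refl)
qed

lemma rng_notin_hereditary:
  assumes "hereditary G H" "y \<in> mor G" "src G y \<notin> H"
  shows "rng G y \<notin> H"
proof
  assume "rng G y \<in> H"
  moreover have "path_le G (rng G y) (src G y)"
    unfolding path_le_def using assms(2) by blast
  ultimately have "src G y \<in> H"
    using assms(1,2) src_in_verts unfolding hereditary_def by blast
  with assms(3) show False by simp
qed

lemma seg_Gamma: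
  assumes "hereditary G H" "l \<in> mor G" "src G l \<notin> H" "p \<le> q" "q \<le> deg G l"
  shows "seg (Gamma G H) l p q = seg G l p q"
proof -
  obtain x p' y where F: "seg_factorization l p q x p' y"
    using assms(2,4,5) by (rule seg_factorization_exists)
  note F' = F[unfolded seg_factorization_def]
  have "src G y \<notin> H"
    using F' assms(3) by (simp add: cmp_simps)
  then have "src G p' \<notin> H"
    using F' rng_notin_hereditary[OF assms(1)] by simp
  then have "src G x \<notin> H"
    using F' rng_notin_hereditary[OF assms(1)] by simp
  with \<open>src G y \<notin> H\<close> \<open>src G p' \<notin> H\<close> have "seg (Gamma G H) l p q = p'"
    unfolding Gamma_def using F' by (intro seg_restrict_eq[OF _ F]) auto
  then show ?thesis
    using seg_eq[OF F] by simp
qed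

lemma no_local_periodicity_Gamma:
  assumes "hereditary G H" "v \<notin> H"
    and loops: "\<And>m n. m \<noteq> n \<Longrightarrow> \<exists>l\<in>mor G. rng G l = v \<and> src G l = v \<and> sup m n \<le> deg G l \<and>
      seg G l m (m + (deg G l - sup m n)) \<noteq> seg G l n (n + (deg G l - sup m n))"
  shows "no_local_periodicity (Gamma G H) v"
  unfolding no_local_periodicity_def
proof (intro allI impI)
  fix m n :: "nat \<times> nat"
  assume "m \<noteq> n"
  then obtain l where l: "l \<in> mor G" "rng G l = v" "src G l = v" "sup m n \<le> deg G l"
    and ne: "seg G l m (m + (deg G l - sup m n)) \<noteq> seg G l n (n + (deg G l - sup m n))"
    using loops by blast
  define d where "d = deg G l - sup m n"
  have "m + d \<le> deg G l" "n + d \<le> deg G l"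
    unfolding d_def using l(4) by (rule add_diff_sup_le)+
  moreover have "m \<le> m + d" "n \<le> n + d"
    by (simp_all add: less_eq_prod_def)
  ultimately have le: "m \<le> m + d" "m + d \<le> deg G l" "n \<le> n + d" "n + d \<le> deg G l"
    by simp_all
  have "src G l \<notin> H"
    using l(3) assms(2) by simp
  then have "seg (Gamma G H) l m (m + d) \<noteq> seg (Gamma G H) l n (n + d)"
    using ne seg_Gamma[OF assms(1) l(1)] le unfolding d_def by simp
  then show "\<exists>l\<in>mor (Gamma G H). rng (Gamma G H) l = v \<and> sup m n \<le> deg (Gamma G H) l \<and>
      seg (Gamma G H) l m (m + (deg (Gamma G H) l - sup m n)) \<noteq>
      seg (Gamma G H) l n (n + (deg (Gamma G H) l - sup m n))"
    using l assms(2) unfolding Gamma_def d_def by auto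
qed

lemma verts_Gamma: "verts (Gamma G H) = verts G - H"
  unfolding verts_def Gamma_def using deg_0_rng_src(2) by auto

end

definition marker :: "nat \<Rightarrow> nat \<Rightarrow> bool list" where
  "marker P i = map (\<lambda>k. k = i) [0..<P]"

lemma length_marker [simp]: "length (marker P i) = P"
  and nth_marker [simp]: "k < P \<Longrightarrow> marker P i ! k = (k = i)"
  unfolding marker_def by simp_all

definition parity :: "bool list \<Rightarrow> bool" where
  "parity zs = foldr (\<noteq>) zs False"

lemma parity_simps [simp]: "parity [] = False" "parity (z # zs) = (z \<noteq> parity zs)"
  unfolding parity_def by simp_all

lemma parity_take_marker: "parity (take i (marker P i)) = False"
proof -
  have "\<not> parity zs" if "\<forall>z\<in>set zs. \<not> z" for zs
    using that by (induction zs) auto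
  moreover have "\<forall>z\<in>set (take i (marker P i)). \<not> z"
    by (auto simp: marker_def take_map in_set_conv_nth)
  ultimately show ?thesis
    by blast
qed

locale quartet = two_graph +
  fixes a b :: nat and u a1 a2 b1 b2 :: 'a
  assumes quartet: "aperiodic_quartet G a b u a1 a2 b1 b2"
begin

definition loops :: "'a set" where
  "loops = {x \<in> mor G. rng G x = u \<and> src G x = u}"

lemma quartet_facts:
  "a1 \<noteq> a2" "b1 \<noteq> b2" "a1 \<in> loops" "a2 \<in> loops" "b1 \<in> loops" "b2 \<in> loops"
  "deg G a1 = (a, 0)" "deg G a2 = (a, 0)" "deg G b1 = (0, b)" "deg G b2 = (0, b)"
  "cmp G b2 a1 = cmp G a1 b2" "cmp G b2 a2 = cmp G a2 b2"
  "cmp G b1 a1 = cmp G a2 b1" "cmp G b1 a2 = cmp G a1 b1"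
  using quartet unfolding aperiodic_quartet_def paths_rng_deg_src_def loops_def by auto

lemma loopsD: "x \<in> loops \<Longrightarrow> x \<in> mor G \<and> rng G x = u \<and> src G x = u"
  unfolding loops_def by simp

lemma u_loop: "u \<in> loops" and deg_u: "deg G u = 0"
proof -
  have "a1 \<in> mor G" "rng G a1 = u"
    using loopsD quartet_facts(3) by simp_all
  then show "u \<in> loops" "deg G u = 0"
    unfolding loops_def using rng_mor rng_rng src_rng deg_rng by auto
qed

lemma degrees_pos: "0 < a" "0 < b"
proof -
  have "x = u" if "x \<in> loops" "deg G x = 0" for x
    using that loopsD deg_0_rng_src by metis
  then show "0 < a" "0 < b"
    using quartet_facts(1-10) by (metis gr0I zero_prod_def)+
qed

lemma loops_cmp [simp]: "x \<in> loops \<Longrightarrow> y \<in> loops \<Longrightarrow> cmp G x y \<in> loops"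
  and loops_assoc [simp]:
    "x \<in> loops \<Longrightarrow> y \<in> loops \<Longrightarrow> z \<in> loops \<Longrightarrow> cmp G (cmp G x y) z = cmp G x (cmp G y z)"
  and deg_loops_cmp: "x \<in> loops \<Longrightarrow> y \<in> loops \<Longrightarrow> deg G (cmp G x y) = deg G x + deg G y"
  unfolding loops_def by (simp_all add: cmp_simps)

lemma loops_unit [simp]: "x \<in> loops \<Longrightarrow> cmp G u x = x" "x \<in> loops \<Longrightarrow> cmp G x u = x"
  using loopsD cmp_rng_left cmp_src_right by metis+

definition alpha :: "bool \<Rightarrow> 'a" where "alpha w = (if w then a1 else a2)"
definition beta :: "bool \<Rightarrow> 'a" where "beta z = (if z then b1 else b2)"

lemma alpha_loop [simp]: "alpha w \<in> loops" and beta_loop [simp]: "beta z \<in> loops"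
  and deg_alpha: "deg G (alpha w) = (a, 0)" and deg_beta: "deg G (beta z) = (0, b)"
  unfolding alpha_def beta_def using quartet_facts by simp_all

text \<open>The four commutation relations of the quartet, in one formula: passing \<open>beta z\<close> to the
  left of an \<open>alpha\<close> flips its label exactly when \<open>z\<close> is true.\<close>

lemma alpha_beta_swap: "cmp G (alpha w) (beta z) = cmp G (beta z) (alpha (w \<noteq> z))"
  unfolding alpha_def beta_def using quartet_facts by auto

definition alpha_word :: "bool list \<Rightarrow> 'a" where
  "alpha_word ws = foldr (\<lambda>w x. cmp G (alpha w) x) ws u"

definition beta_word :: "bool list \<Rightarrow> 'a" where
  "beta_word zs = foldr (\<lambda>z x. cmp G (beta z) x) zs u"

lemma alpha_word_simps [simp]:
  "alpha_word [] = u" "alpha_word (w # ws) = cmp G (alpha w) (alpha_word ws)"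
  and beta_word_simps [simp]:
  "beta_word [] = u" "beta_word (z # zs) = cmp G (beta z) (beta_word zs)"
  unfolding alpha_word_def beta_word_def by simp_all

lemma alpha_word_loop [simp]: "alpha_word ws \<in> loops"
  by (induction ws) (simp_all add: u_loop)

lemma beta_word_loop [simp]: "beta_word zs \<in> loops"
  by (induction zs) (simp_all add: u_loop)

lemma alpha_word_append: "alpha_word (xs @ ys) = cmp G (alpha_word xs) (alpha_word ys)"
  and beta_word_append: "beta_word (xs @ ys) = cmp G (beta_word xs) (beta_word ys)"
  by (induction xs) simp_all

lemma deg_alpha_word: "deg G (alpha_word ws) = (length ws * a, 0)"
  by (induction ws) (simp_all add: deg_loops_cmp deg_alpha deg_u zero_prod_def)

lemma deg_beta_word: "deg G (beta_word zs) = (0, length zs * b)"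
  by (induction zs) (simp_all add: deg_loops_cmp deg_beta deg_u zero_prod_def)

lemma alpha_word_beta_comm:
  "cmp G (alpha_word ws) (beta z) = cmp G (beta z) (alpha_word (map (\<lambda>w. w \<noteq> z) ws))"
proof (induction ws)
  case (Cons w ws)
  have "cmp G (alpha_word (w # ws)) (beta z) = cmp G (alpha w) (cmp G (alpha_word ws) (beta z))"
    by simp
  also have "\<dots> = cmp G (cmp G (alpha w) (beta z)) (alpha_word (map (\<lambda>w. w \<noteq> z) ws))"
    using Cons by simp
  also have "\<dots> = cmp G (beta z) (alpha_word (map (\<lambda>w. w \<noteq> z) (w # ws)))"
    by (simp add: alpha_beta_swap)
  finally show ?case .
qed simp

lemma alpha_word_beta_word_comm:
  "cmp G (alpha_word ws) (beta_word zs) =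
   cmp G (beta_word zs) (alpha_word (map (\<lambda>w. w \<noteq> parity zs) ws))"
proof (induction zs arbitrary: ws)
  case (Cons z zs)
  have "cmp G (alpha_word ws) (beta_word (z # zs)) =
      cmp G (beta z) (cmp G (alpha_word (map (\<lambda>w. w \<noteq> z) ws)) (beta_word zs))"
    by (simp flip: loops_assoc add: alpha_word_beta_comm)
  also have "\<dots> = cmp G (beta z) (cmp G (beta_word zs)
      (alpha_word (map (\<lambda>w. w \<noteq> parity zs) (map (\<lambda>w. w \<noteq> z) ws))))"
    using Cons by simp
  also have "map (\<lambda>w. w \<noteq> parity zs) (map (\<lambda>w. w \<noteq> z) ws) = map (\<lambda>w. w \<noteq> parity (z # zs)) ws"
    by auto
  finally show ?case
    by simp
qed simp

lemma seg_loops: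
  assumes "x \<in> loops" "p \<in> loops" "y \<in> loops" "l = cmp G (cmp G x p) y"
  shows "seg G l (deg G x) (deg G x + deg G p) = p"
  by (rule seg_eq[of _ _ _ x _ y]) (use assms loopsD in \<open>simp add: seg_factorization_def prod_eq_iff\<close>)

definition word_loop :: "bool list \<Rightarrow> bool list \<Rightarrow> 'a" where
  "word_loop W Z = cmp G (alpha_word W) (beta_word Z)"

lemma deg_word_loop: "deg G (word_loop W Z) = (length W * a, length Z * b)"
  unfolding word_loop_def by (simp add: deg_loops_cmp deg_alpha_word deg_beta_word)

lemma seg_word_loop_alpha:
  assumes "i < length W" "j \<le> length Z"
  shows "seg G (word_loop W Z) (i * a, j * b) (i * a + a, j * b) = alpha (W ! i \<noteq> parity (take j Z))"
proof -
  define W' where "W' = map (\<lambda>w. w \<noteq> parity (take j Z)) W"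
  let ?x = "cmp G (beta_word (take j Z)) (alpha_word (take i W'))"
  have i: "i < length W'"
    using assms W'_def by simp
  have "word_loop W Z = cmp G (cmp G (alpha_word W) (beta_word (take j Z))) (beta_word (drop j Z))"
    unfolding word_loop_def using beta_word_append[of "take j Z" "drop j Z"] by simp
  also have "\<dots> = cmp G (cmp G (beta_word (take j Z)) (alpha_word W')) (beta_word (drop j Z))"
    unfolding W'_def by (simp only: alpha_word_beta_word_comm)
  also have "\<dots> = cmp G (cmp G ?x (alpha (W' ! i)))
      (cmp G (alpha_word (drop (Suc i) W')) (beta_word (drop j Z)))"
    using alpha_word_append[of "take i W'" "W' ! i # drop (Suc i) W'"] id_take_nth_drop[OF i]
    by simp
  finally have "seg G (word_loop W Z) (deg G ?x) (deg G ?x + deg G (alpha (W' ! i))) = alpha (W' ! i)"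
    by (rule seg_loops[rotated 3]) simp_all
  moreover have "deg G ?x = (i * a, j * b)"
    using assms i by (simp add: deg_loops_cmp deg_alpha_word deg_beta_word min_def)
  ultimately show ?thesis
    using i W'_def by (simp add: deg_alpha)
qed

lemma seg_word_loop_beta:
  assumes "i \<le> length W" "j < length Z"
  shows "seg G (word_loop W Z) (i * a, j * b) (i * a, j * b + b) = beta (Z ! j)"
proof -
  define W' where "W' = map (\<lambda>w. w \<noteq> parity (take j Z)) (drop i W)"
  define W'' where "W'' = map (\<lambda>w. w \<noteq> Z ! j) W'"
  let ?x = "cmp G (alpha_word (take i W)) (beta_word (take j Z))"
  have "word_loop W Z = cmp G (alpha_word (take i W)) (cmp G (cmp G (alpha_word (drop i W))
      (beta_word (take j Z))) (cmp G (beta (Z ! j)) (beta_word (drop (Suc j) Z))))"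
    unfolding word_loop_def
    using alpha_word_append[of "take i W" "drop i W"] id_take_nth_drop[OF assms(2)]
      beta_word_append[of "take j Z" "Z ! j # drop (Suc j) Z"]
    by simp
  also have "\<dots> = cmp G (alpha_word (take i W)) (cmp G (beta_word (take j Z))
      (cmp G (cmp G (alpha_word W') (beta (Z ! j))) (beta_word (drop (Suc j) Z))))"
    unfolding W'_def by (simp flip: loops_assoc add: alpha_word_beta_word_comm)
  also have "\<dots> = cmp G (cmp G ?x (beta (Z ! j))) (cmp G (alpha_word W'') (beta_word (drop (Suc j) Z)))"
    unfolding W''_def by (simp add: alpha_word_beta_comm)
  finally have "seg G (word_loop W Z) (deg G ?x) (deg G ?x + deg G (beta (Z ! j))) = beta (Z ! j)"
    by (rule seg_loops[rotated 3]) simp_all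
  moreover have "deg G ?x = (i * a, j * b)"
    using assms by (simp add: deg_loops_cmp deg_alpha_word deg_beta_word min_def)
  ultimately show ?thesis
    by (simp add: deg_beta)
qed

text \<open>The degree of the loop exceeds \<open>sup m n\<close> by exactly \<open>scale (a * b - 1) (sup m n) + (a, b)\<close>:
  room enough to shift any window of size at most \<open>(a, b)\<close> from \<open>scale (a * b) m\<close> to
  \<open>scale (a * b) n\<close>.\<close>

lemma separating_loop_exists:
  assumes "m \<noteq> n"
  shows "\<exists>l\<in>mor G. rng G l = u \<and> src G l = u \<and> sup m n \<le> deg G l \<and>
    seg G l m (m + (deg G l - sup m n)) \<noteq> seg G l n (n + (deg G l - sup m n))"
proof -
  obtain m1 m2 n1 n2 where mn: "m = (m1, m2)" "n = (n1, n2)"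
    by fastforce
  define M1 where "M1 = max m1 n1"
  define M2 where "M2 = max m2 n2"
  define K where "K = a * b"
  define W where "W = marker (b * M1 + 1) (b * m1)"
  define Z where "Z = marker (a * M2 + 1) (a * m2)"
  define l where "l = word_loop W Z"
  define t where "t = deg G l - sup m n"
  have a: "0 < a" and b: "0 < b"
    by (fact degrees_pos)+
  have sup: "sup m n = (M1, M2)"
    unfolding mn M1_def M2_def by (simp add: sup_prod_def sup_nat_def)
  have deg_l: "deg G l = ((b * M1 + 1) * a, (a * M2 + 1) * b)"
    unfolding l_def W_def Z_def by (simp add: deg_word_loop)
  have "M1 \<le> M1 * K" "M2 \<le> M2 * K"
    using a b unfolding K_def by simp_all
  then have t: "t = scale (K - 1) (sup m n) + (a, b)" and le: "sup m n \<le> deg G l"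
    unfolding t_def deg_l sup K_def
    by (simp_all add: algebra_simps diff_mult_distrib less_eq_prod_def trans_le_add2)
  have "b * m1 \<le> b * M1" "b * n1 \<le> b * M1" "a * m2 \<le> a * M2" "a * n2 \<le> a * M2"
    unfolding M1_def M2_def by simp_all
  note index_bounds = this[THEN le_imp_less_Suc] this[THEN le_SucI]
  have fits: "m + t \<le> deg G l" "n + t \<le> deg G l"
    unfolding t_def using le by (rule add_diff_sup_le)+
  have "seg G l m (m + t) \<noteq> seg G l n (n + t)"
  proof
    assume "seg G l m (m + t) = seg G l n (n + t)"
    then have shift: "seg G l (scale K m) (scale K m + s) = seg G l (scale K n) (scale K n + s)"
      if "s \<le> (a, b)" for s
      using seg_shift_multiple[OF _ fits] that t l_def
      by (simp add: less_eq_prod_def word_loop_def loopsD)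
    have scaled: "scale K m = (b * m1 * a, a * m2 * b)" "scale K n = (b * n1 * a, a * n2 * b)"
      unfolding K_def mn by simp_all
    show False
    proof (cases "m2 = n2")
      case True
      then have "m1 \<noteq> n1"
        using assms mn by simp
      have "alpha True = alpha False"
      proof -
        have "alpha True = seg G l (b * m1 * a, a * m2 * b) (b * m1 * a + a, a * m2 * b)"
          using seg_word_loop_alpha[of "b * m1" W "a * m2" Z]
          unfolding l_def W_def Z_def by (simp add: index_bounds parity_take_marker)
        also have "\<dots> = seg G l (b * n1 * a, a * m2 * b) (b * n1 * a + a, a * m2 * b)"
          using shift[of "(a, 0)"] scaled True by simp
        also have "\<dots> = alpha False"
          using seg_word_loop_alpha[of "b * n1" W "a * m2" Z] \<open>m1 \<noteq> n1\<close> b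
          unfolding l_def W_def Z_def by (simp add: index_bounds parity_take_marker)
        finally show ?thesis .
      qed
      then show False
        using quartet_facts(1) by (simp add: alpha_def)
    next
      case False
      have "beta True = beta False"
      proof -
        have "beta True = seg G l (b * m1 * a, a * m2 * b) (b * m1 * a, a * m2 * b + b)"
          using seg_word_loop_beta[of "b * m1" W "a * m2" Z]
          unfolding l_def W_def Z_def by (simp add: index_bounds)
        also have "\<dots> = seg G l (b * n1 * a, a * n2 * b) (b * n1 * a, a * n2 * b + b)"
          using shift[of "(0, b)"] scaled by simp
        also have "\<dots> = beta False"
          using seg_word_loop_beta[of "b * n1" W "a * n2" Z] False a
          unfolding l_def W_def Z_def by (simp add: index_bounds)
        finally show ?thesis .
      qed
      then show False
        using quartet_facts(2) by (simp add: beta_def)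
    qed
  qed
  moreover have "l \<in> loops"
    unfolding l_def word_loop_def by simp
  ultimately show ?thesis
    using le unfolding t_def loops_def by blast
qed

end

theorem proposition3p9:
  fixes G :: "('a, 'b) kgraph2_scheme"
  assumes "is_2graph G"
    and "row_finite G"
    and "no_sources G"
    and "\<forall>u\<in>verts G. \<exists>a b a1 a2 b1 b2. 0 < a \<and> 0 < b \<and> aperiodic_quartet G a b u a1 a2 b1 b2"
  shows "strongly_aperiodic G"
  unfolding strongly_aperiodic_def aperiodic_def
proof (intro allI impI ballI)
  interpret two_graph G
    by (fact two_graph.intro[OF assms(1)])
  fix H v
  assume "H \<subseteq> verts G \<and> H \<noteq> verts G \<and> hereditary G H \<and> saturated G H"
    and "v \<in> verts (Gamma G H)"
  then have H: "hereditary G H" and v: "v \<in> verts G" "v \<notin> H"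
    by (simp_all add: verts_Gamma)
  then obtain a b a1 a2 b1 b2 where "aperiodic_quartet G a b v a1 a2 b1 b2"
    using assms(4) by blast
  then interpret quartet G a b v a1 a2 b1 b2
    by unfold_locales
  show "no_local_periodicity (Gamma G H) v"
    using H v(2) separating_loop_exists by (rule no_local_periodicity_Gamma)
qed

end
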